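(* Let $k,l$ be positive integers and put $a=3k-2$, $b=3l-2$. For every cell $c$ of the Aztec rectangle $\mathcal{AR}_{a,b}$, the region $\mathcal{AR}_{a,b}$ with the single defect $c$ has a cover by L-trominoes, i.e. $\mathcal{AR}_{a,b}\setminus\{c\}$ can be partitioned into L-trominoes.
   Context: A cell is a unit square $[i,i+1]\times[j,j+1]$ with $i,j\in\mathbb{Z}$, labelled $(i,j)$. An L-tromino is a set of three cells equal to a $2\times 2$ block of cells with one cell removed. A defect is a cell of a region that must not be covered. A cover of a region $R$ with defect set $D$ is a set of pairwise disjoint L-trominoes, each contained in $R\setminus D$, whose union is $R\setminus D$. For positive integers $a,b$, the Aztec rectangle $\mathcal{AR}_{a,b}$ is (up to translation) the region consisting of the cells $(i,j)\in\mathbb{Z}^2$ with $0\le i+j\le 2b$ and $1\le j-i\le 2a+1$; it has $a$ cells along its southwestern side and $b$ cells along its northwestern side. *)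

theory Defs
  imports Main
begin

type_synonym cell = "int \<times> int"

definition block2 :: "cell \<Rightarrow> cell set" where
  "block2 c = {(fst c, snd c), (fst c + 1, snd c), (fst c, snd c + 1), (fst c + 1, snd c + 1)}"

definition is_L_tromino :: "cell set \<Rightarrow> bool" where
  "is_L_tromino T \<longleftrightarrow> (\<exists>c d. d \<in> block2 c \<and> T = block2 c - {d})"

definition is_cover :: "cell set set \<Rightarrow> cell set \<Rightarrow> cell set \<Rightarrow> bool" where
  "is_cover \<T> R D \<longleftrightarrow>
     (\<forall>T\<in>\<T>. is_L_tromino T \<and> T \<subseteq> R - D) \<and>
     (\<forall>T1\<in>\<T>. \<forall>T2\<in>\<T>. T1 \<noteq> T2 \<longrightarrow> T1 \<inter> T2 = {}) \<and>
     \<Union>\<T> = R - D"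

definition has_cover :: "cell set \<Rightarrow> cell set \<Rightarrow> bool" where
  "has_cover R D \<longleftrightarrow> (\<exists>\<T>. is_cover \<T> R D)"

definition aztec_rect :: "nat \<Rightarrow> nat \<Rightarrow> cell set" where
  "aztec_rect a b = {(i, j). 0 \<le> i + j \<and> i + j \<le> 2 * int b \<and> 1 \<le> j - i \<and> j - i \<le> 2 * int a + 1}"

end

theory Submission
  imports Defs
begin

text \<open>In the diagonal coordinates u = i + j, v = j - i the Aztec rectangle is an ordinary
  rectangle, and a box of u-extent 3 and v-extent 2 is exactly an L-tromino, so diagonal
  boxes of extents 3n by 2m are tileable. For u-extent 2b+1 with b = 3l+1, the rectangle of
  v-extent 2a+1 grows to v-extent 2a+7: place the defect in a suitable translate of the
  smaller rectangle and tile the two leftover boxes, of v-extents 2s and 6-2s. The mirror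
  (i, j) \<mapsto> (-i-1, j) exchanges u and v, giving the growth in b. The starting point
  AR_{1,1} is a 2x2 block.\<close>

definition diag_box :: "int \<Rightarrow> int \<Rightarrow> int \<Rightarrow> int \<Rightarrow> cell set" where
  "diag_box u0 u1 v0 v1 = {(i, j). u0 \<le> i + j \<and> i + j \<le> u1 \<and> v0 \<le> j - i \<and> j - i \<le> v1}"

definition shifted_aztec :: "int \<Rightarrow> int \<Rightarrow> nat \<Rightarrow> nat \<Rightarrow> cell set" where
  "shifted_aztec p q a b = diag_box (2 * p) (2 * p + 2 * int b) (2 * q + 1) (2 * q + 2 * int a + 1)"

definition defect_coverable :: "cell set \<Rightarrow> bool" where
  "defect_coverable R \<longleftrightarrow> (\<forall>c\<in>R. has_cover R {c})"

lemma aztec_rect_eq_shifted_aztec: "aztec_rect a b = shifted_aztec 0 0 a b"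
  unfolding aztec_rect_def shifted_aztec_def diag_box_def by simp

lemma has_cover_empty: "has_cover {} D"
  unfolding has_cover_def is_cover_def by (rule exI[of _ "{}"]) simp

lemma has_cover_L_tromino: "is_L_tromino T \<Longrightarrow> has_cover T {}"
  unfolding has_cover_def is_cover_def by (rule exI[of _ "{T}"]) simp

lemma is_L_tromino_block2_diff: "d \<in> block2 c \<Longrightarrow> is_L_tromino (block2 c - {d})"
  unfolding is_L_tromino_def by blast

lemma defect_coverable_block2: "defect_coverable (block2 c)"
  unfolding defect_coverable_def
proof
  fix d assume "d \<in> block2 c"
  then have "is_cover {block2 c - {d}} (block2 c) {d}"
    unfolding is_cover_def using is_L_tromino_block2_diff by blast
  then show "has_cover (block2 c) {d}"
    unfolding has_cover_def by blast
qed

lemma has_cover_Un: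
  assumes "has_cover R1 D1" "has_cover R2 D2"
    and disj: "R1 \<inter> R2 = {}" and "D1 \<subseteq> R1" "D2 \<subseteq> R2"
  shows "has_cover (R1 \<union> R2) (D1 \<union> D2)"
proof -
  obtain \<T>1 \<T>2 where \<T>1: "is_cover \<T>1 R1 D1" and \<T>2: "is_cover \<T>2 R2 D2"
    using assms(1,2) unfolding has_cover_def by blast
  have sub1: "\<And>T. T \<in> \<T>1 \<Longrightarrow> is_L_tromino T \<and> T \<subseteq> R1 - D1"
    and disj1: "\<And>A B. A \<in> \<T>1 \<Longrightarrow> B \<in> \<T>1 \<Longrightarrow> A \<noteq> B \<Longrightarrow> A \<inter> B = {}"
    and un1: "\<Union>\<T>1 = R1 - D1"
    using \<T>1 unfolding is_cover_def by auto
  have sub2: "\<And>T. T \<in> \<T>2 \<Longrightarrow> is_L_tromino T \<and> T \<subseteq> R2 - D2"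
    and disj2: "\<And>A B. A \<in> \<T>2 \<Longrightarrow> B \<in> \<T>2 \<Longrightarrow> A \<noteq> B \<Longrightarrow> A \<inter> B = {}"
    and un2: "\<Union>\<T>2 = R2 - D2"
    using \<T>2 unfolding is_cover_def by auto
  have "\<forall>T\<in>\<T>1 \<union> \<T>2. is_L_tromino T \<and> T \<subseteq> R1 \<union> R2 - (D1 \<union> D2)"
    using sub1 sub2 assms(3-5) by blast
  moreover have "\<forall>A\<in>\<T>1 \<union> \<T>2. \<forall>B\<in>\<T>1 \<union> \<T>2. A \<noteq> B \<longrightarrow> A \<inter> B = {}"
  proof (intro ballI impI)
    have cross: "A \<inter> B = {}" if "A \<in> \<T>1" "B \<in> \<T>2" for A B
      using sub1[OF that(1)] sub2[OF that(2)] disj by blast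
    fix A B assume "A \<in> \<T>1 \<union> \<T>2" "B \<in> \<T>1 \<union> \<T>2" "A \<noteq> B"
    then show "A \<inter> B = {}"
      using disj1 disj2 cross[of A B] cross[of B A] by (metis Int_commute Un_iff)
  qed
  moreover have "\<Union>(\<T>1 \<union> \<T>2) = R1 \<union> R2 - (D1 \<union> D2)"
    using un1 un2 assms(3-5) by auto
  ultimately show ?thesis
    unfolding has_cover_def is_cover_def by blast
qed

lemma has_cover_image:
  assumes "inj f" and L: "\<And>T. is_L_tromino T \<Longrightarrow> is_L_tromino (f ` T)"
    and "has_cover R D"
  shows "has_cover (f ` R) (f ` D)"
proof -
  obtain \<T> where \<T>: "is_cover \<T> R D"
    using assms(3) unfolding has_cover_def by blast
  have "\<forall>T\<in>image f ` \<T>. is_L_tromino T \<and> T \<subseteq> f ` R - f ` D"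
    using \<T> L unfolding is_cover_def by (auto simp: inj_eq[OF \<open>inj f\<close>])
  moreover have "\<forall>A\<in>image f ` \<T>. \<forall>B\<in>image f ` \<T>. A \<noteq> B \<longrightarrow> A \<inter> B = {}"
  proof (intro ballI impI)
    fix A B assume "A \<in> image f ` \<T>" "B \<in> image f ` \<T>" "A \<noteq> B"
    then obtain T1 T2 where "T1 \<in> \<T>" "T2 \<in> \<T>" "T1 \<noteq> T2" "A = f ` T1" "B = f ` T2"
      by blast
    then show "A \<inter> B = {}"
      using \<T> unfolding is_cover_def by (simp flip: image_Int[OF \<open>inj f\<close>])
  qed
  moreover have "\<Union> (image f ` \<T>) = f ` R - f ` D"
    using \<T> \<open>inj f\<close> unfolding is_cover_def by (simp flip: image_Union image_set_diff)
  ultimately show ?thesis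
    unfolding has_cover_def is_cover_def by blast
qed

lemma defect_coverable_image:
  assumes "inj f" "\<And>T. is_L_tromino T \<Longrightarrow> is_L_tromino (f ` T)" "defect_coverable R"
  shows "defect_coverable (f ` R)"
  using assms has_cover_image[OF assms(1,2), of R "{_}"]
  unfolding defect_coverable_def by auto

lemma is_L_tromino_diag_box: "is_L_tromino (diag_box u (u + 2) v (v + 1))"
proof -
  obtain x y where u: "u = x + y" and v: "v = y - x \<or> v = y - x - 1"
  proof
    show "u = (u - v) div 2 + (u - (u - v) div 2)"
      by simp
    show "v = (u - (u - v) div 2) - (u - v) div 2 \<or> v = (u - (u - v) div 2) - (u - v) div 2 - 1"
      by presburger
  qed
  have "v = y - x \<Longrightarrow> diag_box u (u + 2) v (v + 1) = block2 (x, y) - {(x + 1, y)}"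
    "v = y - x - 1 \<Longrightarrow> diag_box u (u + 2) v (v + 1) = block2 (x, y) - {(x, y + 1)}"
    unfolding u diag_box_def block2_def by (intro set_eqI; clarsimp; arith)+
  moreover have "(x + 1, y) \<in> block2 (x, y)" "(x, y + 1) \<in> block2 (x, y)"
    unfolding block2_def by simp_all
  ultimately show ?thesis
    using v is_L_tromino_block2_diff by metis
qed

lemma has_cover_diag_strip: "u1 = u0 + 3 * int n - 1 \<Longrightarrow> has_cover (diag_box u0 u1 v (v + 1)) {}"
proof (induction n arbitrary: u0)
  case 0
  then have "diag_box u0 u1 v (v + 1) = {}"
    unfolding diag_box_def by auto
  then show ?case
    using has_cover_empty by simp
next
  case (Suc n)
  have "diag_box u0 u1 v (v + 1) = diag_box u0 (u0 + 2) v (v + 1) \<union> diag_box (u0 + 3) u1 v (v + 1)"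
    using Suc.prems unfolding diag_box_def by (intro set_eqI) (clarsimp, arith)
  moreover have "diag_box u0 (u0 + 2) v (v + 1) \<inter> diag_box (u0 + 3) u1 v (v + 1) = {}"
    unfolding diag_box_def by auto
  moreover have "has_cover (diag_box (u0 + 3) u1 v (v + 1)) {}"
    using Suc.prems by (intro Suc.IH) simp
  ultimately show ?case
    using has_cover_Un[OF has_cover_L_tromino[OF is_L_tromino_diag_box]] by simp
qed

lemma has_cover_diag_box:
  "u1 = u0 + 3 * int n - 1 \<Longrightarrow> v1 = v0 + 2 * int m - 1 \<Longrightarrow> has_cover (diag_box u0 u1 v0 v1) {}"
proof (induction m arbitrary: v0)
  case 0
  then have "diag_box u0 u1 v0 v1 = {}"
    unfolding diag_box_def by auto
  then show ?case
    using has_cover_empty by simp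
next
  case (Suc m)
  have "diag_box u0 u1 v0 v1 = diag_box u0 u1 v0 (v0 + 1) \<union> diag_box u0 u1 (v0 + 2) v1"
    using Suc.prems unfolding diag_box_def by (intro set_eqI) (clarsimp, arith)
  moreover have "diag_box u0 u1 v0 (v0 + 1) \<inter> diag_box u0 u1 (v0 + 2) v1 = {}"
    unfolding diag_box_def by auto
  moreover have "has_cover (diag_box u0 u1 (v0 + 2) v1) {}"
    using Suc.prems by (intro Suc.IH) simp_all
  ultimately show ?case
    using has_cover_Un[OF has_cover_diag_strip[OF Suc.prems(1)]] by simp
qed

definition mirror :: "cell \<Rightarrow> cell" where
  "mirror c = (- fst c - 1, snd c)"

lemma inj_mirror: "inj mirror"
  unfolding mirror_def by (rule injI) (simp add: prod_eq_iff)

lemma mirror_block2: "mirror ` block2 c = block2 (- fst c - 2, snd c)"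
  unfolding mirror_def block2_def by auto

lemma is_L_tromino_mirror:
  assumes "is_L_tromino T"
  shows "is_L_tromino (mirror ` T)"
proof -
  obtain c d where "d \<in> block2 c" "T = block2 c - {d}"
    using assms unfolding is_L_tromino_def by blast
  moreover have "mirror d \<in> block2 (- fst c - 2, snd c)"
    using \<open>d \<in> block2 c\<close> by (simp flip: mirror_block2)
  ultimately show ?thesis
    using is_L_tromino_block2_diff by (simp add: image_set_diff[OF inj_mirror] mirror_block2)
qed

lemma mirror_shifted_aztec: "mirror ` shifted_aztec p q a b = shifted_aztec q p b a"
proof (intro set_eqI iffI)
  fix c assume "c \<in> shifted_aztec q p b a"
  then have "mirror c \<in> shifted_aztec p q a b" "c = mirror (mirror c)"
    unfolding shifted_aztec_def diag_box_def mirror_def by auto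
  then show "c \<in> mirror ` shifted_aztec p q a b"
    by blast
qed (auto simp: shifted_aztec_def diag_box_def mirror_def)

lemma defect_coverable_shifted_aztec_transpose:
  "defect_coverable (shifted_aztec p q a b) \<Longrightarrow> defect_coverable (shifted_aztec q p b a)"
  using defect_coverable_image[OF inj_mirror is_L_tromino_mirror] by (metis mirror_shifted_aztec)

lemma exists_even_window:
  fixes x w :: int
  assumes "0 \<le> x" "x \<le> 2 * int n + w" "1 \<le> w"
  shows "\<exists>s\<le>n. 2 * int s \<le> x \<and> x \<le> 2 * int s + w"
  using assms(2)
proof (induction n)
  case (Suc n)
  show ?case
  proof (cases "x \<le> 2 * int n + w")
    case True
    then show ?thesis
      using Suc.IH le_SucI by blast
  next
    case False
    then show ?thesis
      using Suc.prems assms(3) by (intro exI[of _ "Suc n"]) auto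
  qed
qed (use assms(1) in auto)

lemma defect_coverable_shifted_aztec_step:
  assumes IH: "\<And>p q. defect_coverable (shifted_aztec p q a (3 * l + 1))" and "1 \<le> a"
  shows "defect_coverable (shifted_aztec p q (a + 3) (3 * l + 1))"
  unfolding defect_coverable_def
proof
  let ?u1 = "2 * p + 6 * int l + 2"
  fix c assume c: "c \<in> shifted_aztec p q (a + 3) (3 * l + 1)"
  obtain i j where ij: "c = (i, j)"
    by (cases c)
  have "0 \<le> j - i - 2 * q - 1" "j - i - 2 * q - 1 \<le> 2 * int 3 + 2 * int a"
    using c unfolding ij shifted_aztec_def diag_box_def by auto
  then have "\<exists>s\<le>3. 2 * int s \<le> j - i - 2 * q - 1 \<and> j - i - 2 * q - 1 \<le> 2 * int s + 2 * int a"
    using \<open>1 \<le> a\<close> by (intro exists_even_window) auto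
  then obtain s where s: "s \<le> 3" "2 * int s \<le> j - i - 2 * q - 1" "j - i - 2 * q - 1 \<le> 2 * int s + 2 * int a"
    by blast
  define Mid where "Mid = shifted_aztec p (q + int s) a (3 * l + 1)"
  define Low where "Low = diag_box (2 * p) ?u1 (2 * q + 1) (2 * q + 2 * int s)"
  define Up where "Up = diag_box (2 * p) ?u1 (2 * q + 2 * int s + 2 * int a + 2) (2 * q + 2 * int a + 7)"
  have split: "shifted_aztec p q (a + 3) (3 * l + 1) = (Mid \<union> Low) \<union> Up"
    unfolding Mid_def Low_def Up_def shifted_aztec_def diag_box_def using s(1)
    by (intro set_eqI) (clarsimp, arith)
  have "c \<in> Mid"
    using c s unfolding ij Mid_def shifted_aztec_def diag_box_def by auto
  have "has_cover Mid {c}"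
    using IH \<open>c \<in> Mid\<close> unfolding Mid_def defect_coverable_def by blast
  moreover have "has_cover Low {}"
    unfolding Low_def by (rule has_cover_diag_box[where n = "2 * l + 1" and m = s]) simp_all
  moreover have "Mid \<inter> Low = {}"
    unfolding Mid_def Low_def shifted_aztec_def diag_box_def by auto
  ultimately have "has_cover (Mid \<union> Low) {c}"
    using has_cover_Un[of Mid "{c}" Low "{}"] \<open>c \<in> Mid\<close> by simp
  moreover have "has_cover Up {}"
    unfolding Up_def using s(1)
    by (intro has_cover_diag_box[where n = "2 * l + 1" and m = "3 - s"]) (simp_all add: of_nat_diff)
  moreover have "(Mid \<union> Low) \<inter> Up = {}"
    unfolding Mid_def Low_def Up_def shifted_aztec_def diag_box_def by auto
  ultimately show "has_cover (shifted_aztec p q (a + 3) (3 * l + 1)) {c}"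
    unfolding split using has_cover_Un[of "Mid \<union> Low" "{c}" Up "{}"] \<open>c \<in> Mid\<close> by simp
qed

lemma defect_coverable_shifted_aztec:
  "defect_coverable (shifted_aztec p q (3 * k + 1) (3 * l + 1))"
proof -
  have step: "defect_coverable (shifted_aztec p q (3 * Suc k + 1) (3 * l + 1))"
    if "\<And>p q. defect_coverable (shifted_aztec p q (3 * k + 1) (3 * l + 1))" for p q k l
    using defect_coverable_shifted_aztec_step[OF that] by simp
  have column: "defect_coverable (shifted_aztec p q (3 * k + 1) 1)" for p q k
  proof (induction k arbitrary: p q)
    case 0
    have "shifted_aztec p q 1 1 = block2 (p - q - 1, p + q + 1)"
      unfolding shifted_aztec_def diag_box_def block2_def by (intro set_eqI) (clarsimp, arith)
    then show ?case
      using defect_coverable_block2 by simp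
  next
    case (Suc k)
    then show ?case
      using step[of k 0] by simp
  qed
  have row: "defect_coverable (shifted_aztec p q 1 (3 * l + 1))" for p q
    using defect_coverable_shifted_aztec_transpose[OF column] .
  show ?thesis
  proof (induction k arbitrary: p q)
    case 0
    then show ?case
      using row by simp
  next
    case (Suc k)
    then show ?case
      using step by blast
  qed
qed

theorem theorem2:
  fixes k l :: nat and c :: cell
  assumes "k \<ge> 1" and "l \<ge> 1"
    and "c \<in> aztec_rect (3 * k - 2) (3 * l - 2)"
  shows "has_cover (aztec_rect (3 * k - 2) (3 * l - 2)) {c}"
proof -
  have "3 * k - 2 = 3 * (k - 1) + 1" "3 * l - 2 = 3 * (l - 1) + 1"
    using assms(1,2) by simp_all
  then have "defect_coverable (aztec_rect (3 * k - 2) (3 * l - 2))"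
    using defect_coverable_shifted_aztec by (simp add: aztec_rect_eq_shifted_aztec)
  then show ?thesis
    using assms(3) unfolding defect_coverable_def by blast
qed

end
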